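(* Let $n$ be a positive integer and $x\in\Gamma_n$. Then every vertex $v$ of the BPSP graph $G_x$ satisfies $\deg_{G_x}(v)\le 4$.
   Context: Let $[n]=\{1,\dots,n\}$. $\Gamma_n$ is the set of words $x=(x_1,\dots,x_{2n})\in[n]^{2n}$ in which every symbol of $[n]$ occurs exactly twice. $[\,\cdot\,]$ is the Iverson bracket. For $i\in[2n-1]$, $\eta(x,i)=[x_{i+1}\in\{x_1,\dots,x_i\}]\oplus[x_i\in\{x_1,\dots,x_{i-1}\}]$. For $e\subseteq[n]$, $\theta_x(e)=-\sum_{i=1}^{2n-1}(-1)^{\eta(x,i)}\delta_{e,\{x_i,x_{i+1}\}}$. The BPSP graph $G_x=(V_x,E_x,W_x)$ has $V_x=[n]$, $E_x=\{\{x_i,x_{i+1}\}: i\in[2n-1],\ x_i\neq x_{i+1},\ \theta_x(\{x_i,x_{i+1}\})\neq0\}$, $W_x=\theta_x|_{E_x}$. $\deg_G(v)=|\{u\in V:\{u,v\}\in E\}|$. *)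

theory Defs
  imports Main
begin

(* Words x = (x_1,...,x_{2n}) are represented as functions x :: nat => nat;
   only the values x 1, ..., x (2n) matter. *)

definition Gamma :: "nat \<Rightarrow> (nat \<Rightarrow> nat) set" where
  "Gamma n = {x. (\<forall>i\<in>{1..2*n}. x i \<in> {1..n}) \<and>
                  (\<forall>a\<in>{1..n}. card {i\<in>{1..2*n}. x i = a} = 2)}"

definition eta :: "(nat \<Rightarrow> nat) \<Rightarrow> nat \<Rightarrow> nat" where
  "eta x i = (if (x (i+1) \<in> x ` {1..i}) \<noteq> (x i \<in> x ` {1..i-1}) then 1 else 0)"

definition theta :: "nat \<Rightarrow> (nat \<Rightarrow> nat) \<Rightarrow> nat set \<Rightarrow> int" where
  "theta n x e = - (\<Sum>i\<in>{1..2*n-1}. (-1) ^ eta x i * (if e = {x i, x (i+1)} then 1 else 0))"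

definition bpsp_edges :: "nat \<Rightarrow> (nat \<Rightarrow> nat) \<Rightarrow> nat set set" where
  "bpsp_edges n x = {{x i, x (i+1)} | i. i \<in> {1..2*n-1} \<and> x i \<noteq> x (i+1)
                                         \<and> theta n x {x i, x (i+1)} \<noteq> 0}"

definition bpsp_vertices :: "nat \<Rightarrow> nat set" where
  "bpsp_vertices n = {1..n}"

definition bpsp_weight :: "nat \<Rightarrow> (nat \<Rightarrow> nat) \<Rightarrow> nat set \<Rightarrow> int" where
  "bpsp_weight n x e = (if e \<in> bpsp_edges n x then theta n x e else 0)"

definition deg :: "'a set \<Rightarrow> 'a set set \<Rightarrow> 'a \<Rightarrow> nat" where
  "deg V E v = card {u\<in>V. {u, v} \<in> E}"

end

theory Submission
  imports Defs
begin

(* A letter v occurs at exactly two positions of x, each of which has at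
   most two adjacent positions, so v has at most four neighbours. *)

lemma deg_adjacent_edges_le:
  fixes x :: "nat \<Rightarrow> 'a"
  assumes adjacent: "\<And>e. e \<in> E \<Longrightarrow> \<exists>i\<in>{1..m-1}. e = {x i, x (i+1)}"
  shows "deg V E v \<le> 2 * card {j\<in>{1..m}. x j = v}"
proof -
  define P where "P = {j\<in>{1..m}. x j = v}"
  have "finite P"
    by (simp add: P_def)
  have "{u\<in>V. {u, v} \<in> E} \<subseteq> (\<lambda>j. x (j-1)) ` P \<union> (\<lambda>j. x (j+1)) ` P"
  proof
    fix u assume "u \<in> {u\<in>V. {u, v} \<in> E}"
    then obtain i where i: "i \<in> {1..m-1}" "{u, v} = {x i, x (i+1)}"
      using adjacent by blast
    then have "(i+1 \<in> P \<and> u = x i) \<or> (i \<in> P \<and> u = x (i+1))"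
      by (auto simp: P_def doubleton_eq_iff)
    then show "u \<in> (\<lambda>j. x (j-1)) ` P \<union> (\<lambda>j. x (j+1)) ` P"
      by force
  qed
  then have "deg V E v \<le> card ((\<lambda>j. x (j-1)) ` P \<union> (\<lambda>j. x (j+1)) ` P)"
    unfolding deg_def using \<open>finite P\<close> by (intro card_mono) auto
  also have "\<dots> \<le> card ((\<lambda>j. x (j-1)) ` P) + card ((\<lambda>j. x (j+1)) ` P)"
    by (rule card_Un_le)
  also have "\<dots> \<le> 2 * card P"
    using card_image_le[OF \<open>finite P\<close>, of "\<lambda>j. x (j-1)"]
      card_image_le[OF \<open>finite P\<close>, of "\<lambda>j. x (j+1)"] by linarith
  finally show ?thesis
    by (simp add: P_def)
qed

lemma bpsp_edges_adjacent:
  "e \<in> bpsp_edges n x \<Longrightarrow> \<exists>i\<in>{1..2*n-1}. e = {x i, x (i+1)}"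
  unfolding bpsp_edges_def by blast

lemma card_occurrences_Gamma:
  "x \<in> Gamma n \<Longrightarrow> v \<in> {1..n} \<Longrightarrow> card {i\<in>{1..2*n}. x i = v} = 2"
  unfolding Gamma_def by blast

theorem proposition5:
  fixes n :: nat and x :: "nat \<Rightarrow> nat" and v :: nat
  assumes "n \<ge> 1" and "x \<in> Gamma n" and "v \<in> bpsp_vertices n"
  shows "deg (bpsp_vertices n) (bpsp_edges n x) v \<le> 4"
proof -
  have "deg (bpsp_vertices n) (bpsp_edges n x) v \<le> 2 * card {i\<in>{1..2*n}. x i = v}"
    by (rule deg_adjacent_edges_le) (rule bpsp_edges_adjacent)
  also have "\<dots> = 4"
    using assms(2,3) card_occurrences_Gamma unfolding bpsp_vertices_def by simp
  finally show ?thesis .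
qed

end
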